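(* For every $c>0$ the sequence $((n+c)^{-6})_{n\in\mathbb Z_+}$ is a Hausdorff moment sequence. For $c>0$ and $n\in\mathbb Z_+$ let $p_c(n)=\sum_{j=0}^n (j+c)^6$. There exists $\delta>0$ such that for every $c\in(1-\delta,1+\delta)$ the sequence $(1/p_c(n))_{n\in\mathbb Z_+}$ is not a Hausdorff moment sequence. Equivalently, with $K_c(z,w)=\sum_{n\ge0}(n+c)^6(z\bar w)^n$ and $S(z,w)=(1-z\bar w)^{-1}$ on the unit disc, $K_c$ is a contractive subnormal kernel for all $c>0$, while the product kernel $SK_c$ is not subnormal for $c$ in a neighborhood of $1$.
   Context: A sequence $(x_n)_{n\in\mathbb Z_+}$ of positive numbers is a Hausdorff moment sequence if there is a positive Radon measure $\mu$ on $[0,1]$ with $x_n=\int_0^1 t^n\,d\mu(t)$ for all $n$. A kernel $K(z,w)=\sum_j a_j(z\bar w)^j$ ($a_j>0$) on the unit disc is a contractive subnormal kernel iff multiplication by $z$ on its reproducing kernel Hilbert space is a contractive subnormal operator, which holds iff $(1/a_n)_{n}$ is a Hausdorff moment sequence. *)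

theory Defs
  imports "HOL-Probability.Probability"
begin

text \<open>A sequence of positive reals is a Hausdorff moment sequence if there is a positive
  finite (= Radon, since [0,1] is compact) Borel measure on the real line concentrated on [0,1]
  whose moments are the terms of the sequence.\<close>
definition hausdorff_moment_seq :: "(nat \<Rightarrow> real) \<Rightarrow> bool" where
  "hausdorff_moment_seq x \<longleftrightarrow>
     (\<forall>n. x n > 0) \<and>
     (\<exists>M :: real measure.
        sets M = sets borel \<and> finite_measure M \<and> emeasure M (- {0..1}) = 0 \<and>
        (\<forall>n. integrable M (\<lambda>t. t ^ n) \<and> x n = (\<integral>t. t ^ n \<partial>M)))"

definition p_c :: "real \<Rightarrow> nat \<Rightarrow> real" where
  "p_c c n = (\<Sum>j=0..n. (real j + c) ^ 6)"

end

theory Submission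
  imports Defs
begin

text \<open>
  Since \<open>1/(n+c)^6 = \<integral>\<^sub>0\<^sup>\<infinity> e^(-ns) s^5 e^(-cs) / 5! ds\<close>, the first sequence is the moment
  sequence of the image of \<open>s^5 e^(-cs) / 5! ds\<close> under \<open>s \<mapsto> e^(-s)\<close>.

  For \<open>c = 1\<close>, \<open>7 p\<^sub>1(n) = m (m^2 - 1/4) (m^4 - 3/2 m^2 + 31/48)\<close> with \<open>m = n + 3/2\<close>, a
  polynomial in \<open>m\<close> with seven simple roots \<open>\<rho>\<close>, all with \<open>Re \<rho> < 3/2\<close>. Partial fractions
  together with \<open>1/(m - \<rho>) = \<integral>\<^sub>0\<^sup>1 t^n t^(1/2 - \<rho>) dt\<close> exhibit \<open>1/p\<^sub>1(n)\<close> as the moments of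
  an integrable signed density \<open>w\<close> on \<open>[0,1]\<close>. Two conjugate roots \<open>\<mu>, \<mu>\<^sup>*\<close> have real part
  in \<open>(1/2, 1)\<close>, so as \<open>t \<rightarrow> 0\<close> the density is dominated by
  \<open>t^(1/2 - Re \<mu>) cos(Im \<mu> log t - \<theta>)\<close>, which oscillates with unbounded amplitude; hence
  \<open>w(t\<^sub>0) < 0\<close> somewhere. A bump at \<open>t\<^sub>0\<close>, approximated from above by a polynomial \<open>q\<close>,
  is nonnegative on \<open>[0,1]\<close> and yet \<open>\<Sum>\<^sub>j q\<^sub>j / p\<^sub>1(j) < 0\<close>, which no Hausdorff moment
  sequence allows. This pairing depends continuously on \<open>c\<close>, so the obstruction persists
  near \<open>c = 1\<close>.
\<close>

section \<open>Hausdorff moment sequences\<close>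

lemma hausdorff_moment_seq_of_laplace:
  fixes f :: "real \<Rightarrow> real" and x :: "nat \<Rightarrow> real"
  assumes f_meas [measurable]: "f \<in> borel_measurable borel"
    and f_nonneg: "\<And>s. 0 \<le> f s" and f_halfline: "\<And>s. s < 0 \<Longrightarrow> f s = 0"
    and laplace: "\<And>n. has_bochner_integral lborel (\<lambda>s. f s * exp (- s) ^ n) (x n)"
    and x_pos: "\<And>n. x n > 0"
  shows "hausdorff_moment_seq x"
  unfolding hausdorff_moment_seq_def
proof (intro conjI exI allI)
  define D where "D = density lborel f"
  define M where "M = distr D borel (\<lambda>s. exp (- s))"
  show "sets M = sets borel" by (simp add: M_def)
  have D_moments: "has_bochner_integral D (\<lambda>s. exp (- s) ^ n) (x n)" for n
    unfolding D_def using laplace[of n] f_nonneg by (intro has_bochner_integral_density) auto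
  have M_moments: "has_bochner_integral M (\<lambda>t. t ^ n) (x n)" for n
    unfolding M_def using D_moments by (intro has_bochner_integral_distr) (auto simp: D_def)
  then show "integrable M (\<lambda>t. t ^ n)" "x n = (\<integral>t. t ^ n \<partial>M)" for n
    by (simp_all add: has_bochner_integral_iff)
  have "emeasure M (space M) = emeasure D UNIV"
    by (simp add: M_def emeasure_distr D_def)
  also have "\<dots> = (\<integral>\<^sup>+ s. f s \<partial>lborel)"
    by (simp add: D_def emeasure_density)
  also have "\<dots> = ennreal (x 0)"
    using nn_integral_eq_integrable[of f lborel "x 0"] laplace[of 0] f_nonneg x_pos[of 0]
    by (simp add: has_bochner_integral_iff)
  finally show "finite_measure M" by (intro finite_measureI) simp
  have "emeasure M (- {0..1}) = emeasure D {s. exp (- s) \<notin> {0..1}}"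
    by (simp add: M_def emeasure_distr D_def vimage_def Compl_eq)
  also have "\<dots> = (\<integral>\<^sup>+ s. ennreal (f s) * indicator {s. exp (- s) \<notin> {0..1}} s \<partial>lborel)"
    by (simp add: D_def emeasure_density)
  also have "\<dots> = (\<integral>\<^sup>+ s. 0 \<partial>(lborel::real measure))"
    by (rule nn_integral_cong) (auto simp: f_halfline indicator_def)
  finally show "emeasure M (- {0..1}) = 0" by simp
qed (use x_pos in auto)

lemma hausdorff_moment_seq_inverse_power:
  fixes c :: real assumes "c > 0"
  shows "hausdorff_moment_seq (\<lambda>n. 1 / (real n + c) ^ Suc k)"
proof (rule hausdorff_moment_seq_of_laplace)
  define f where "f s = erlang_density k c s / c ^ Suc k" for s
  show "f \<in> borel_measurable borel" "0 \<le> f s" for s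
    unfolding f_def using \<open>c > 0\<close> by auto
  show "s < 0 \<Longrightarrow> f s = 0" for s by (simp add: f_def erlang_density_def)
  show "1 / (real n + c) ^ Suc k > 0" for n using \<open>c > 0\<close> by simp
  show "has_bochner_integral lborel (\<lambda>s. f s * exp (- s) ^ n) (1 / (real n + c) ^ Suc k)" for n
  proof -
    have l: "0 < real n + c" using \<open>c > 0\<close> by simp
    have scaled: "erlang_density k l s / l ^ Suc k = (if s < 0 then 0 else s ^ k * exp (- (l * s)) / fact k)"
      if "l > 0" for l s
      using that by (simp add: erlang_density_def)
    have exp_shift: "exp (- (c * s)) * exp (- s) ^ n = exp (- ((real n + c) * s))" for s
      by (simp add: exp_add[symmetric] algebra_simps flip: exp_of_nat_mult)
    have "f s * exp (- s) ^ n = erlang_density k (real n + c) s / (real n + c) ^ Suc k" for s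
      unfolding f_def scaled[OF \<open>c > 0\<close>] scaled[OF l] by (simp flip: exp_shift)
    moreover have "has_bochner_integral lborel (erlang_density k (real n + c)) 1"
      using nn_integral_erlang_ith_moment[OF l, of k 0] l
      by (intro has_bochner_integral_nn_integral) (auto intro!: AE_I2)
    ultimately show ?thesis
      using has_bochner_integral_divide_zero by force
  qed
qed

lemma hausdorff_moment_seq_nonneg_pairing:
  assumes "hausdorff_moment_seq x" and q_nonneg: "\<forall>t\<in>{0..1::real}. 0 \<le> (\<Sum>j\<le>d. q j * t ^ j)"
  shows "0 \<le> (\<Sum>j\<le>d. q j * x j)"
proof -
  obtain M :: "real measure" where M: "sets M = sets borel" "emeasure M (- {0..1}) = 0"
    "\<And>n. integrable M (\<lambda>t. t ^ n)" "\<And>n. x n = (\<integral>t. t ^ n \<partial>M)"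
    using assms(1) unfolding hausdorff_moment_seq_def by blast
  have "(\<Sum>j\<le>d. q j * x j) = (\<integral>t. (\<Sum>j\<le>d. q j * t ^ j) \<partial>M)"
    using M(3) by (simp add: M(4) integral_sum)
  also have "\<dots> \<ge> 0"
  proof (rule integral_nonneg_AE)
    have "- {0..1} \<in> null_sets M" using M(1,2) by (auto simp: null_sets_def)
    then show "AE t in M. 0 \<le> (\<Sum>j\<le>d. q j * t ^ j)"
      by (rule AE_I') (use q_nonneg in auto)
  qed
  finally show ?thesis .
qed

lemma absolutely_integrable_continuous_mult:
  fixes g w :: "real \<Rightarrow> real"
  assumes "continuous_on {a..b} g" "w absolutely_integrable_on {a..b}"
  shows "(\<lambda>t. g t * w t) absolutely_integrable_on {a..b}"
proof (rule absolutely_integrable_bounded_measurable_product_real[OF _ _ _ assms(2)])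
  show "g \<in> borel_measurable (lebesgue_on {a..b})"
    using assms(1) by (rule continuous_imp_measurable_on_sets_lebesgue) auto
  show "bounded (g ` {a..b})"
    using assms(1) by (intro compact_imp_bounded compact_continuous_image) auto
qed auto

lemma exists_bump_with_negative_integral:
  fixes w :: "real \<Rightarrow> real"
  assumes w: "w absolutely_integrable_on {0..1}" and "isCont w t0" "0 < t0" "t0 < 1" "w t0 < 0"
  shows "\<exists>g. continuous_on {0..1} g \<and> (\<forall>t\<in>{0..1}. 0 \<le> g t) \<and> integral {0..1} (\<lambda>t. g t * w t) < 0"
proof -
  define \<eta> where "\<eta> = - w t0 / 2"
  have \<eta>: "\<eta> > 0" using \<open>w t0 < 0\<close> by (simp add: \<eta>_def)
  obtain d where d: "d > 0" "\<And>t. dist t t0 < d \<Longrightarrow> dist (w t) (w t0) < \<eta>"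
    using \<open>isCont w t0\<close> \<eta> unfolding continuous_at_eps_delta by blast
  define h where "h = min d (min t0 (1 - t0))"
  have h: "h > 0" "h \<le> d" "h \<le> t0" "h \<le> 1 - t0" using d \<open>0 < t0\<close> \<open>t0 < 1\<close> by (auto simp: h_def)
  define g where "g t = max 0 (h - \<bar>t - t0\<bar>)" for t
  have g_cont: "continuous_on UNIV g" unfolding g_def by (intro continuous_intros)
  have g_nonneg: "g t \<ge> 0" for t by (simp add: g_def)
  have g_int: "g integrable_on {a..b}" for a b
    using g_cont by (intro integrable_continuous_interval) (auto intro: continuous_on_subset)
  have gw_int: "(\<lambda>t. g t * w t) integrable_on {0..1}"
    using absolutely_integrable_continuous_mult[OF continuous_on_subset[OF g_cont] w]
    by (auto simp: absolutely_integrable_on_def)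
  have gw_le: "g t * w t \<le> - \<eta> * g t" for t
  proof (cases "\<bar>t - t0\<bar> < h")
    case True
    then have "dist (w t) (w t0) < \<eta>" using h by (intro d(2)) (simp add: dist_real_def)
    then have "w t < - \<eta>" by (simp add: \<eta>_def dist_real_def abs_less_iff)
    then have "g t * w t \<le> g t * (- \<eta>)" using g_nonneg[of t] by (intro mult_left_mono) auto
    then show ?thesis by (metis mult.commute mult_minus_right)
  next
    case False then show ?thesis by (simp add: g_def)
  qed
  have "h * (h / 2) \<le> integral {t0 - h/2..t0 + h/2} g"
  proof -
    have "integral {t0 - h/2..t0 + h/2} (\<lambda>t. h / 2) \<le> integral {t0 - h/2..t0 + h/2} g"
      by (intro integral_le g_int integrable_const_ivl) (auto simp: g_def split: abs_split)
    then show ?thesis using h by (simp add: content_real)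
  qed
  also have "\<dots> \<le> integral {0..1} g"
    using h g_nonneg by (intro integral_subset_le g_int) auto
  finally have "h * (h / 2) \<le> integral {0..1} g" .
  moreover have "0 < h * (h / 2)" using h by simp
  ultimately have "integral {0..1} g > 0" by linarith
  then have "- \<eta> * integral {0..1} g < 0" using \<eta> by simp
  moreover have "integral {0..1} (\<lambda>t. g t * w t) \<le> integral {0..1} (\<lambda>t. - \<eta> * g t)"
    by (intro integral_le gw_int integrable_on_mult_right g_int gw_le)
  ultimately have "integral {0..1} (\<lambda>t. g t * w t) < 0" by simp
  then show ?thesis using continuous_on_subset[OF g_cont] g_nonneg by blast
qed

lemma exists_nonneg_polynomial_with_negative_integral:
  fixes g w :: "real \<Rightarrow> real"
  assumes w: "w absolutely_integrable_on {0..1}" and g_cont: "continuous_on {0..1} g"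
    and g_nonneg: "\<forall>t\<in>{0..1}. 0 \<le> g t" and gw_neg: "integral {0..1} (\<lambda>t. g t * w t) < 0"
  shows "\<exists>q d. (\<forall>t\<in>{0..1}. 0 \<le> (\<Sum>j\<le>d. q j * t ^ j)) \<and>
                integral {0..1} (\<lambda>t. (\<Sum>j\<le>d. q j * t ^ j) * w t) < 0"
proof -
  define I where "I = integral {0..1} (\<lambda>t. g t * w t)"
  define Iw where "Iw = integral {0..1} (\<lambda>t. \<bar>w t\<bar>)"
  have absw_int: "(\<lambda>t. \<bar>w t\<bar>) integrable_on {0..1}"
    using w by (auto simp: absolutely_integrable_on_def)
  have Iw: "Iw \<ge> 0" unfolding Iw_def by (intro integral_nonneg absw_int) auto
  define \<epsilon> where "\<epsilon> = - I / (4 * (Iw + 1))"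
  have \<epsilon>: "\<epsilon> > 0" using gw_neg Iw by (simp add: \<epsilon>_def I_def divide_neg_pos)
  obtain p where "real_polynomial_function p" and p_approx: "\<And>t. t \<in> {0..1} \<Longrightarrow> \<bar>g t - p t\<bar> < \<epsilon>"
    using Stone_Weierstrass_real_polynomial_function[OF _ g_cont \<epsilon>] by auto
  then obtain a d where p: "p = (\<lambda>t. \<Sum>j\<le>d. a j * t ^ j)"
    unfolding real_polynomial_function_iff_sum by blast
  define q where "q j = a j + (if j = 0 then \<epsilon> else 0)" for j
  have q_eq: "(\<Sum>j\<le>d. q j * t ^ j) = p t + \<epsilon>" for t
    by (simp add: q_def p distrib_right sum.distrib if_distrib[of "\<lambda>x. x * _"] cong: if_cong)
  have mult_w_int: "(\<lambda>t. h t * w t) integrable_on {0..1}" if "continuous_on {0..1} h" for h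
    using absolutely_integrable_continuous_mult[OF that w] by (simp add: absolutely_integrable_on_def)
  have p_cont: "continuous_on {0..1} p" unfolding p by (intro continuous_intros)
  have "integral {0..1} (\<lambda>t. (p t + \<epsilon>) * w t) - I = integral {0..1} (\<lambda>t. (p t + \<epsilon> - g t) * w t)"
    using mult_w_int[of "\<lambda>t. p t + \<epsilon>"] mult_w_int[OF g_cont] p_cont
    unfolding I_def by (simp add: left_diff_distrib Henstock_Kurzweil_Integration.integral_diff continuous_intros)
  also have "\<dots> \<le> integral {0..1} (\<lambda>t. 2 * \<epsilon> * \<bar>w t\<bar>)"
  proof (intro integral_le integrable_on_mult_right absw_int)
    show "(\<lambda>t. (p t + \<epsilon> - g t) * w t) integrable_on {0..1}"
      using p_cont g_cont by (intro mult_w_int continuous_intros)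
    fix t :: real assume "t \<in> {0..1}"
    then have "\<bar>p t + \<epsilon> - g t\<bar> \<le> 2 * \<epsilon>" using p_approx[of t] \<epsilon> by linarith
    then have "\<bar>p t + \<epsilon> - g t\<bar> * \<bar>w t\<bar> \<le> 2 * \<epsilon> * \<bar>w t\<bar>" by (rule mult_right_mono) simp
    then show "(p t + \<epsilon> - g t) * w t \<le> 2 * \<epsilon> * \<bar>w t\<bar>"
      by (metis abs_ge_self abs_mult order_trans)
  qed
  also have "\<dots> = 2 * \<epsilon> * Iw" by (simp add: Iw_def)
  also have "\<dots> \<le> - I / 2"
    using Iw gw_neg by (simp add: \<epsilon>_def I_def field_simps)
  finally have "integral {0..1} (\<lambda>t. (\<Sum>j\<le>d. q j * t ^ j) * w t) < 0"
    using gw_neg unfolding q_eq I_def by linarith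
  moreover have "0 \<le> (\<Sum>j\<le>d. q j * t ^ j)" if "t \<in> {0..1}" for t
  proof -
    have "0 \<le> g t" "g t - p t < \<epsilon>" using g_nonneg p_approx[OF that] that by auto
    then show ?thesis unfolding q_eq by linarith
  qed
  ultimately show ?thesis by blast
qed

lemma signed_density_moment_certificate:
  fixes w :: "real \<Rightarrow> real" and x :: "nat \<Rightarrow> real"
  assumes moments: "\<And>n. ((\<lambda>t. t ^ n * w t) has_integral x n) {0..1}"
    and w: "w absolutely_integrable_on {0..1}" and "isCont w t0" "0 < t0" "t0 < 1" "w t0 < 0"
  shows "\<exists>q d. (\<forall>t\<in>{0..1}. 0 \<le> (\<Sum>j\<le>d. q j * t ^ j)) \<and> (\<Sum>j\<le>d. q j * x j) < 0"
proof -
  obtain g where "continuous_on {0..1} g" "\<forall>t\<in>{0..1}. 0 \<le> g t" "integral {0..1} (\<lambda>t. g t * w t) < 0"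
    using exists_bump_with_negative_integral[OF w assms(3-6)] by blast
  then obtain q d where q_nonneg: "\<forall>t\<in>{0..1}. 0 \<le> (\<Sum>j\<le>d. q j * t ^ j)"
    and neg: "integral {0..1} (\<lambda>t. (\<Sum>j\<le>d. q j * t ^ j) * w t) < 0"
    using exists_nonneg_polynomial_with_negative_integral[OF w] by blast
  have "((\<lambda>t. \<Sum>j\<le>d. q j * (t ^ j * w t)) has_integral (\<Sum>j\<le>d. q j * x j)) {0..1}"
    by (intro has_integral_sum finite_atMost has_integral_mult_right moments)
  then have "integral {0..1} (\<lambda>t. (\<Sum>j\<le>d. q j * t ^ j) * w t) = (\<Sum>j\<le>d. q j * x j)"
    by (simp add: sum_distrib_right mult.assoc integral_unique)
  then show ?thesis using q_nonneg neg by auto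
qed

lemma eventually_not_hausdorff_moment_seq:
  fixes x :: "real \<Rightarrow> nat \<Rightarrow> real"
  assumes cont: "\<And>n. isCont (\<lambda>c. x c n) c0"
    and q_nonneg: "\<forall>t\<in>{0..1::real}. 0 \<le> (\<Sum>j\<le>d. q j * t ^ j)"
    and neg: "(\<Sum>j\<le>d. q j * x c0 j) < 0"
  shows "eventually (\<lambda>c. \<not> hausdorff_moment_seq (x c)) (nhds c0)"
proof -
  have "isCont (\<lambda>c. \<Sum>j\<le>d. q j * x c j) c0"
    using cont by (intro continuous_intros)
  then have "eventually (\<lambda>c. (\<Sum>j\<le>d. q j * x c j) < 0) (nhds c0)"
    using neg by (simp add: isCont_def eventually_nhds_conv_at order_tendstoD)
  then show ?thesis
    by (rule eventually_mono) (use hausdorff_moment_seq_nonneg_pairing[OF _ q_nonneg] in force)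
qed

section \<open>Partial fractions and their densities\<close>

definition partial_fraction_coeff :: "'a::field set \<Rightarrow> 'a \<Rightarrow> 'a" where
  "partial_fraction_coeff S \<rho> = 1 / (\<Prod>\<sigma>\<in>S - {\<rho>}. (\<rho> - \<sigma>))"

lemma inverse_prod_partial_fractions:
  fixes S :: "'a::field set"
  assumes "finite S" "S \<noteq> {}" "x \<notin> S"
  shows "1 / (\<Prod>\<rho>\<in>S. (x - \<rho>)) = (\<Sum>\<rho>\<in>S. partial_fraction_coeff S \<rho> / (x - \<rho>))"
  using assms
proof (induction S arbitrary: x rule: finite_ne_induct)
  case (singleton a)
  then show ?case by (simp add: partial_fraction_coeff_def)
next
  case (insert a S)
  let ?B = "partial_fraction_coeff S"
  have x: "x \<noteq> a" "x \<notin> S" using insert.prems by auto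
  have a_ne: "\<rho> \<noteq> a" if "\<rho> \<in> S" for \<rho> using that insert.hyps by auto
  have coeff_a: "partial_fraction_coeff (insert a S) a = 1 / (\<Prod>\<sigma>\<in>S. (a - \<sigma>))"
    using insert.hyps by (simp add: partial_fraction_coeff_def)
  have coeff_S: "partial_fraction_coeff (insert a S) \<rho> = ?B \<rho> / (\<rho> - a)" if "\<rho> \<in> S" for \<rho>
  proof -
    have "insert a S - {\<rho>} = insert a (S - {\<rho>})" using a_ne[OF that] by auto
    then show ?thesis using insert.hyps by (simp add: partial_fraction_coeff_def)
  qed
  have "1 / (\<Prod>\<rho>\<in>insert a S. (x - \<rho>)) = 1 / (x - a) * (\<Sum>\<rho>\<in>S. ?B \<rho> / (x - \<rho>))"
    using insert.hyps by (simp add: insert.IH[OF x(2), symmetric])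
  also have "\<dots> = (\<Sum>\<rho>\<in>S. ?B \<rho> / ((\<rho> - a) * (x - \<rho>))) + 1 / (x - a) * (\<Sum>\<rho>\<in>S. ?B \<rho> / (a - \<rho>))"
  proof -
    have "1 / (x - a) * (?B \<rho> / (x - \<rho>)) = ?B \<rho> / ((\<rho> - a) * (x - \<rho>)) + 1 / (x - a) * (?B \<rho> / (a - \<rho>))"
      if "\<rho> \<in> S" for \<rho>
    proof -
      have "\<rho> - a \<noteq> 0" "a - \<rho> \<noteq> 0" "x - \<rho> \<noteq> 0" "x - a \<noteq> 0"
        using a_ne[OF that] x that by auto
      then show ?thesis by (simp add: divide_simps) (simp add: algebra_simps)
    qed
    then show ?thesis by (simp add: sum_distrib_left sum.distrib[symmetric])
  qed
  also have "\<dots> = (\<Sum>\<rho>\<in>S. ?B \<rho> / ((\<rho> - a) * (x - \<rho>))) + 1 / ((\<Prod>\<sigma>\<in>S. (a - \<sigma>)) * (x - a))"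
    by (simp add: insert.IH[OF insert.hyps(3), symmetric])
  also have "\<dots> = (\<Sum>\<rho>\<in>insert a S. partial_fraction_coeff (insert a S) \<rho> / (x - \<rho>))"
    using insert.hyps by (simp add: coeff_a coeff_S add.commute mult.commute)
  finally show ?case .
qed

lemma partial_fraction_coeff_nonzero: "partial_fraction_coeff S \<rho> \<noteq> 0"
  by (cases "finite S") (auto simp: partial_fraction_coeff_def)

lemma partial_fraction_coeff_cnj:
  assumes "cnj ` S = S"
  shows "partial_fraction_coeff S (cnj \<rho>) = cnj (partial_fraction_coeff S \<rho>)"
proof -
  have inj: "inj_on cnj A" for A by (rule inj_onI) simp
  have "cnj ` (S - {\<rho>}) = S - {cnj \<rho>}"
    using assms image_set_diff[OF inj[of UNIV], of S "{\<rho>}"] by simp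
  then have "(\<Prod>\<sigma>\<in>S - {cnj \<rho>}. (cnj \<rho> - \<sigma>)) = (\<Prod>\<sigma>\<in>S - {\<rho>}. (cnj \<rho> - cnj \<sigma>))"
    using prod.reindex[OF inj, of "\<lambda>\<sigma>. cnj \<rho> - \<sigma>" "S - {\<rho>}"] by (simp add: o_def)
  then show ?thesis by (simp add: partial_fraction_coeff_def)
qed

lemma complex_powr_has_integral_01:
  fixes z :: complex assumes "Re z > 0"
  shows "((\<lambda>t. of_real t powr (z - 1)) has_integral (1 / z)) {0..1}"
proof -
  have "((\<lambda>t. complex_of_real t powr (z - 1)) has_integral
            (of_real 1 powr z / z - of_real 0 powr z / z)) {0..1}"
    using assms
    by (intro fundamental_theorem_of_calculus_interior)
       (auto intro!: continuous_intros derivative_eq_intros has_vector_derivative_real_field)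
  then show ?thesis by simp
qed

definition partial_fraction_density :: "complex set \<Rightarrow> real \<Rightarrow> real \<Rightarrow> complex" where
  "partial_fraction_density S a t =
     (\<Sum>\<rho>\<in>S. partial_fraction_coeff S \<rho> * of_real t powr (of_real a - 1 - \<rho>))"

lemma partial_fraction_density_moments:
  assumes "finite S" "S \<noteq> {}" and Re_lt: "\<forall>\<rho>\<in>S. Re \<rho> < a"
  shows "((\<lambda>t. of_real (t ^ n) * partial_fraction_density S a t) has_integral
            1 / (\<Prod>\<rho>\<in>S. (of_real (real n + a) - \<rho>))) {0..1}"
proof -
  define x where "x = complex_of_real (real n + a)"
  have Re_pos: "Re (x - \<rho>) > 0" if "\<rho> \<in> S" for \<rho>
    using Re_lt that of_nat_0_le_iff[of n] by (fastforce simp: x_def)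
  then have "x \<notin> S" by force
  have "((\<lambda>t. of_real (t ^ n) * (partial_fraction_coeff S \<rho> * of_real t powr (of_real a - 1 - \<rho>)))
          has_integral partial_fraction_coeff S \<rho> / (x - \<rho>)) {0..1}" if "\<rho> \<in> S" for \<rho>
  proof -
    have "((\<lambda>t. partial_fraction_coeff S \<rho> * of_real t powr (x - \<rho> - 1))
            has_integral partial_fraction_coeff S \<rho> / (x - \<rho>)) {0..1}"
      using has_integral_mult_right[OF complex_powr_has_integral_01[OF Re_pos[OF that]]] by simp
    moreover have "of_real t powr (x - \<rho> - 1) = of_real (t ^ n) * of_real t powr (of_real a - 1 - \<rho>)"
      if "t \<in> {0..1}" for t :: real
    proof (cases "t = 0")
      case False
      have "x - \<rho> - 1 = of_nat n + (of_real a - 1 - \<rho>)" by (simp add: x_def)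
      then have "of_real t powr (x - \<rho> - 1) = of_real t powr of_nat n * of_real t powr (of_real a - 1 - \<rho>)"
        by (simp only: powr_add)
      also have "of_real t powr of_nat n = (of_real t :: complex) ^ n"
        using False by (simp add: powr_nat')
      finally show ?thesis by simp
    qed simp
    ultimately show ?thesis
      by (subst has_integral_cong[symmetric]) (auto simp: mult.left_commute)
  qed
  then have "((\<lambda>t. of_real (t ^ n) * partial_fraction_density S a t) has_integral
               (\<Sum>\<rho>\<in>S. partial_fraction_coeff S \<rho> / (x - \<rho>))) {0..1}"
    unfolding partial_fraction_density_def sum_distrib_left by (intro has_integral_sum \<open>finite S\<close>)
  then show ?thesis
    using inverse_prod_partial_fractions[OF assms(1,2) \<open>x \<notin> S\<close>] by (simp add: x_def)
qed

lemma partial_fraction_density_absolutely_integrable: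
  assumes "finite S" and Re_lt: "\<forall>\<rho>\<in>S. Re \<rho> < a"
  shows "partial_fraction_density S a absolutely_integrable_on {0..1}"
  unfolding partial_fraction_density_def
proof (intro absolutely_integrable_sum \<open>finite S\<close>)
  fix \<rho> assume "\<rho> \<in> S"
  then have Re_pos: "Re (of_real a - \<rho>) > 0" using Re_lt by simp
  let ?c = "partial_fraction_coeff S \<rho>"
  show "(\<lambda>t. ?c * of_real t powr (of_real a - 1 - \<rho>)) absolutely_integrable_on {0..1}"
  proof (rule absolutely_integrable_integrable_bound)
    show "norm (?c * of_real t powr (of_real a - 1 - \<rho>)) \<le> cmod ?c * t powr (a - 1 - Re \<rho>)"
      if "t \<in> {0..1}" for t
      using that by (simp add: norm_mult norm_powr_real_powr)
    have "of_real a - 1 - \<rho> = (of_real a - \<rho>) - 1" by simp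
    then show "(\<lambda>t. ?c * of_real t powr (of_real a - 1 - \<rho>)) integrable_on {0..1}"
      using has_integral_mult_right[OF complex_powr_has_integral_01[OF Re_pos]]
      by (metis integrable_on_def)
    have "a - 1 - Re \<rho> > -1" using Re_pos by simp
    then show "(\<lambda>t. cmod ?c * t powr (a - 1 - Re \<rho>)) integrable_on {0..1}"
      using has_integral_powr_from_0[of "a - 1 - Re \<rho>" 1]
      by (intro integrable_on_mult_right) (auto simp: integrable_on_def)
  qed
qed

lemma isCont_partial_fraction_density:
  assumes "t > 0"
  shows "isCont (partial_fraction_density S a) t"
proof -
  have powr_cont: "isCont (\<lambda>x. complex_of_real x powr z) t" for z
    using assms by (intro isCont_powr_complex) (auto simp: complex_nonpos_Reals_iff)
  then show ?thesis
    unfolding partial_fraction_density_def by (intro continuous_intros powr_cont)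
qed

section \<open>The roots of \<open>p\<^sub>1\<close>\<close>

text \<open>\<open>mu^2\<close> and its conjugate are the roots of \<open>z^2 - 3/2 z + 31/48\<close>, so \<open>\<plusminus>mu\<close> and \<open>\<plusminus>cnj mu\<close>
  are the roots of the quartic factor of \<open>7 p\<^sub>1(n)\<close>. The dominant roots \<open>mu, cnj mu\<close> are those
  of largest real part; the other five are called minor.\<close>

definition mu :: complex where
  "mu = csqrt (Complex (3/4) (sqrt 3 / 6))"

definition minor_roots :: "complex set" where
  "minor_roots = {0, 1/2, -1/2, -mu, -cnj mu}"

definition p1_roots :: "complex set" where
  "p1_roots = insert mu (insert (cnj mu) minor_roots)"

lemma mu_squared: "mu\<^sup>2 = Complex (3/4) (sqrt 3 / 6)"
  by (simp add: mu_def)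

lemma Re_mu_gt: "Re mu > 1/2"
proof -
  have "(Re mu)\<^sup>2 = 3/4 + (Im mu)\<^sup>2"
    using arg_cong[OF mu_squared, of Re] by (simp add: power2_eq_square)
  then have "(1/2)\<^sup>2 < (Re mu)\<^sup>2"
    by (simp add: power_divide add_pos_nonneg)
  moreover have "Re mu \<ge> 0" unfolding mu_def by (rule Re_csqrt)
  ultimately show ?thesis by (rule power_less_imp_less_base)
qed

lemma Im_mu_pos: "Im mu > 0"
proof -
  have "Re mu * Im mu * 12 = sqrt 3"
    using arg_cong[OF mu_squared, of Im] by (simp add: power2_eq_square mult_ac)
  then have "Re mu * Im mu > 0" using real_sqrt_gt_zero[of 3] by linarith
  then show ?thesis using Re_mu_gt by (simp add: zero_less_mult_iff)
qed

lemma Re_mu_lt: "Re mu < 1"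
proof -
  have "cmod (Complex (3/4) (sqrt 3 / 6)) < 1"
    by (simp add: cmod_def power_divide)
  then have "cmod mu < 1" by (simp add: mu_def)
  then show ?thesis using complex_Re_le_cmod[of mu] by linarith
qed

lemma finite_p1_roots [simp]: "finite minor_roots" "finite p1_roots"
  by (simp_all add: minor_roots_def p1_roots_def)

lemma dominant_roots_notin:
  "mu \<notin> insert (cnj mu) minor_roots" "cnj mu \<notin> minor_roots"
  using Re_mu_gt Im_mu_pos by (auto simp: minor_roots_def complex_eq_iff)

lemma Re_minor_roots: "\<rho> \<in> minor_roots \<Longrightarrow> Re \<rho> \<le> 1/2"
proof -
  have "\<forall>\<rho>\<in>minor_roots. Re \<rho> \<le> 1/2" using Re_mu_gt by (simp add: minor_roots_def)
  then show "\<rho> \<in> minor_roots \<Longrightarrow> Re \<rho> \<le> 1/2" by blast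
qed

lemma Re_p1_roots: "\<rho> \<in> p1_roots \<Longrightarrow> Re \<rho> < 3/2"
  using Re_mu_lt by (auto simp: p1_roots_def dest!: Re_minor_roots)

lemma cnj_p1_roots: "cnj ` p1_roots = p1_roots"
  by (auto simp: p1_roots_def minor_roots_def)

lemma quartic_factor_roots:
  fixes x :: complex
  shows "(x - mu) * (x + mu) * ((x - cnj mu) * (x + cnj mu)) = x ^ 4 - 3/2 * x\<^sup>2 + 31/48"
proof -
  define z where "z = Complex (3/4) (sqrt 3 / 6)"
  have mu2: "mu\<^sup>2 = z" "(cnj mu)\<^sup>2 = cnj z"
    by (simp_all add: mu_def z_def flip: complex_cnj_power)
  have "(x - mu) * (x + mu) * ((x - cnj mu) * (x + cnj mu)) = (x\<^sup>2 - z) * (x\<^sup>2 - cnj z)"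
    by (simp flip: mu2 add: algebra_simps power2_eq_square)
  also have "\<dots> = x ^ 4 - (z + cnj z) * x\<^sup>2 + z * cnj z"
    by (simp add: algebra_simps power2_eq_square power4_eq_xxxx)
  also have "z + cnj z = 3/2" by (simp add: z_def complex_eq_iff)
  also have "z * cnj z = 31/48" by (simp add: z_def complex_eq_iff)
  finally show ?thesis .
qed

lemma prod_p1_roots:
  "(\<Prod>\<rho>\<in>p1_roots. (x - \<rho>)) = x * (x\<^sup>2 - 1/4) * (x ^ 4 - 3/2 * x\<^sup>2 + 31/48)"
proof -
  have roots: "p1_roots = set [mu, cnj mu, 0, 1/2, -1/2, -mu, -cnj mu]"
    by (simp add: p1_roots_def minor_roots_def)
  have "distinct [mu, cnj mu, 0, 1/2, -1/2, -mu, -cnj mu]"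
    using Re_mu_gt Im_mu_pos by (auto simp: complex_eq_iff)
  then have "(\<Prod>\<rho>\<in>p1_roots. (x - \<rho>)) =
          x * ((x - 1/2) * (x + 1/2)) * ((x - mu) * (x + mu) * ((x - cnj mu) * (x + cnj mu)))"
    unfolding roots prod.distinct_set_conv_list[OF \<open>distinct _\<close>] by (simp add: mult_ac)
  also have "\<dots> = x * (x\<^sup>2 - 1/4) * (x ^ 4 - 3/2 * x\<^sup>2 + 31/48)"
    unfolding quartic_factor_roots by (simp add: algebra_simps power2_eq_square)
  finally show ?thesis .
qed

lemma p_c_1_eq_prod:
  "complex_of_real (p_c 1 n) = (\<Prod>\<rho>\<in>p1_roots. (of_real (real n + 3/2) - \<rho>)) / 7"
proof -
  have closed_form: "p_c 1 n = (let m = real n + 3/2 in m * (m\<^sup>2 - 1/4) * (m ^ 4 - 3/2 * m\<^sup>2 + 31/48) / 7)"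
    by (induction n) (simp_all add: p_c_def Let_def field_simps power_def)
  show ?thesis unfolding closed_form prod_p1_roots Let_def by simp
qed

section \<open>The density of \<open>1/p\<^sub>1\<close> changes sign\<close>

lemma p_c_pos: "c > 0 \<Longrightarrow> p_c c n > 0"
  unfolding p_c_def by (intro sum_pos2[of _ 0]) auto

lemma isCont_inverse_p_c: "c > 0 \<Longrightarrow> isCont (\<lambda>x. 1 / p_c x n) c"
  using p_c_pos[of c n] unfolding p_c_def by (intro continuous_intros) auto

definition p1_density :: "real \<Rightarrow> real" where
  "p1_density t = 7 * Re (partial_fraction_density p1_roots (3/2) t)"

lemma p1_density_moments: "((\<lambda>t. t ^ n * p1_density t) has_integral 1 / p_c 1 n) {0..1}"
proof -
  have "p1_roots \<noteq> {}" by (simp add: p1_roots_def)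
  then have "((\<lambda>t. of_real (t ^ n) * partial_fraction_density p1_roots (3/2) t) has_integral
          1 / (\<Prod>\<rho>\<in>p1_roots. (of_real (real n + 3/2) - \<rho>))) {0..1}"
    by (intro partial_fraction_density_moments finite_p1_roots ballI Re_p1_roots)
  from has_integral_mult_right[OF this, of 7]
  have "((\<lambda>t. 7 * (of_real (t ^ n) * partial_fraction_density p1_roots (3/2) t)) has_integral
          of_real (1 / p_c 1 n)) {0..1}"
    by (simp add: p_c_1_eq_prod)
  then show ?thesis
    by (auto dest: has_integral_Re simp: p1_density_def mult.left_commute)
qed

lemma p1_density_absolutely_integrable: "p1_density absolutely_integrable_on {0..1}"
proof -
  have "(Re \<circ> partial_fraction_density p1_roots (3/2)) absolutely_integrable_on {0..1}"
    using partial_fraction_density_absolutely_integrable[of p1_roots "3/2"] Re_p1_roots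
    by (intro absolutely_integrable_linear bounded_linear_Re) auto
  then show ?thesis
    unfolding p1_density_def by (simp add: o_def)
qed

lemma isCont_p1_density: "t > 0 \<Longrightarrow> isCont p1_density t"
  unfolding p1_density_def by (intro continuous_intros isCont_Re isCont_partial_fraction_density)

lemma oscillating_exponential_bound_negative:
  fixes f :: "real \<Rightarrow> real"
  assumes "A > 0" "a > 0" "b > 0"
    and bound: "\<And>u. u > 0 \<Longrightarrow> f u \<le> A * exp (a * u) * cos (\<theta> + b * u) + C"
  shows "\<exists>u>0. f u < 0"
proof -
  \<comment> \<open>\<open>\<theta> + b u\<close> an odd multiple of \<open>\<pi>\<close>, and \<open>u\<close> so large that \<open>A exp(a u) > C\<close>\<close>
  define L where "L = max 0 (C / (A * a))"
  obtain k :: nat where k: "(b * L + \<theta>) / (2 * pi) < real k"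
    using reals_Archimedean2 by blast
  define u where "u = (pi - \<theta> + 2 * pi * real k) / b"
  have "b * L + \<theta> < 2 * pi * real k"
    using k by (simp add: pos_divide_less_eq mult_ac)
  moreover have "b * u = pi - \<theta> + 2 * pi * real k"
    using \<open>b > 0\<close> by (simp add: u_def)
  ultimately have "b * L < b * u" using pi_gt_zero by linarith
  then have "L < u" using \<open>b > 0\<close> by simp
  then have "u > 0" and "C < A * a * u"
    using \<open>A > 0\<close> \<open>a > 0\<close> by (auto simp: L_def field_simps)
  have odd_pi: "\<theta> + b * u = real (2 * k + 1) * pi"
    using \<open>b > 0\<close> by (simp add: u_def field_simps)
  have cos_u: "cos (\<theta> + b * u) = -1"
    unfolding odd_pi cos_npi by simp
  have "a * u < exp (a * u)"
    using exp_ge_add_one_self[of "a * u"] by linarith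
  then have "A * a * u < A * exp (a * u)"
    using \<open>A > 0\<close> by (simp add: mult.assoc)
  then have "f u < 0"
    using bound[OF \<open>u > 0\<close>] cos_u \<open>C < A * a * u\<close> by simp
  then show ?thesis using \<open>u > 0\<close> by blast
qed

lemma p1_density_exp_bound:
  fixes u :: real
  defines "c \<equiv> partial_fraction_coeff p1_roots"
  assumes "u > 0"
  shows "p1_density (exp (- u)) \<le>
           14 * cmod (c mu) * exp ((Re mu - 1/2) * u) * cos (Arg (c mu) + Im mu * u)
           + 7 * (\<Sum>\<rho>\<in>minor_roots. cmod (c \<rho>))"
proof -
  define E where "E \<rho> = exp ((\<rho> - 1/2) * complex_of_real u)" for \<rho>
  have powr_E: "of_real (exp (- u)) powr (of_real (3/2) - 1 - \<rho>) = E \<rho>" for \<rho>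
    by (simp add: powr_def E_def Ln_of_real algebra_simps)
  have density: "partial_fraction_density p1_roots (3/2) (exp (- u)) =
      c mu * E mu + c (cnj mu) * E (cnj mu) + (\<Sum>\<rho>\<in>minor_roots. c \<rho> * E \<rho>)"
    unfolding partial_fraction_density_def powr_E c_def[symmetric]
    using dominant_roots_notin by (simp add: p1_roots_def add.assoc)
  \<comment> \<open>the conjugate roots contribute \<open>2 Re (c mu * E mu)\<close>; the others stay bounded\<close>
  have conj_pair: "c (cnj mu) * E (cnj mu) = cnj (c mu * E mu)"
    unfolding c_def by (simp add: partial_fraction_coeff_cnj[OF cnj_p1_roots] E_def exp_cnj)
  have "c mu * E mu = rcis (cmod (c mu)) (Arg (c mu)) * rcis (exp ((Re mu - 1/2) * u)) (Im mu * u)"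
    unfolding rcis_cmod_Arg by (simp add: E_def exp_eq_polar rcis_def algebra_simps)
  then have dominant: "Re (c mu * E mu) = cmod (c mu) * exp ((Re mu - 1/2) * u) * cos (Arg (c mu) + Im mu * u)"
    by (simp add: rcis_mult)
  have "Re (\<Sum>\<rho>\<in>minor_roots. c \<rho> * E \<rho>) \<le> cmod (\<Sum>\<rho>\<in>minor_roots. c \<rho> * E \<rho>)"
    by (rule complex_Re_le_cmod)
  also have "\<dots> \<le> (\<Sum>\<rho>\<in>minor_roots. cmod (c \<rho> * E \<rho>))" by (rule norm_sum)
  also have "\<dots> \<le> (\<Sum>\<rho>\<in>minor_roots. cmod (c \<rho>))"
  proof (intro sum_mono)
    fix \<rho> assume "\<rho> \<in> minor_roots"
    then have "cmod (E \<rho>) \<le> 1"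
      using Re_minor_roots \<open>u > 0\<close> by (simp add: E_def mult_nonpos_nonneg)
    then show "cmod (c \<rho> * E \<rho>) \<le> cmod (c \<rho>)"
      by (simp add: norm_mult mult_left_le)
  qed
  finally show ?thesis
    unfolding p1_density_def density conj_pair using dominant by simp
qed

lemma p1_density_negative: "\<exists>t. 0 < t \<and> t < 1 \<and> p1_density t < 0"
proof -
  let ?c = "partial_fraction_coeff p1_roots mu"
  have "\<exists>u>0. p1_density (exp (- u)) < 0"
  proof (rule oscillating_exponential_bound_negative)
    show "14 * cmod ?c > 0" "Re mu - 1/2 > 0" "Im mu > 0"
      using partial_fraction_coeff_nonzero Re_mu_gt Im_mu_pos by auto
  qed (use p1_density_exp_bound in \<open>simp add: mult.assoc\<close>)
  then obtain u where "u > 0" "p1_density (exp (- u)) < 0" by blast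
  then show ?thesis by (intro exI[of _ "exp (- u)"]) auto
qed

theorem mainTheorem5:
  shows "(\<forall>c::real. c > 0 \<longrightarrow> hausdorff_moment_seq (\<lambda>n. 1 / (real n + c) ^ 6)) \<and>
         (\<exists>\<delta>::real. \<delta> > 0 \<and>
            (\<forall>c. c > 0 \<and> 1 - \<delta> < c \<and> c < 1 + \<delta> \<longrightarrow>
                 \<not> hausdorff_moment_seq (\<lambda>n. 1 / p_c c n)))"
proof (intro conjI allI impI)
  show "hausdorff_moment_seq (\<lambda>n. 1 / (real n + c) ^ 6)" if "c > 0" for c :: real
    using hausdorff_moment_seq_inverse_power[OF that, of 5] by simp
  obtain t0 where "0 < t0" "t0 < 1" "p1_density t0 < 0"
    using p1_density_negative by blast
  then obtain q d where "\<forall>t\<in>{0..1}. 0 \<le> (\<Sum>j\<le>d. q j * t ^ j)" "(\<Sum>j\<le>d. q j * (1 / p_c 1 j)) < 0"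
    using signed_density_moment_certificate[OF p1_density_moments p1_density_absolutely_integrable
        isCont_p1_density] by blast
  then have "eventually (\<lambda>c. \<not> hausdorff_moment_seq (\<lambda>n. 1 / p_c c n)) (nhds 1)"
    by (intro eventually_not_hausdorff_moment_seq[where x = "\<lambda>c n. 1 / p_c c n"] isCont_inverse_p_c) auto
  then obtain \<delta> where "\<delta> > 0" "\<forall>c. dist c 1 < \<delta> \<longrightarrow> \<not> hausdorff_moment_seq (\<lambda>n. 1 / p_c c n)"
    unfolding eventually_nhds_metric by blast
  then show "\<exists>\<delta>>0. \<forall>c. c > 0 \<and> 1 - \<delta> < c \<and> c < 1 + \<delta> \<longrightarrow> \<not> hausdorff_moment_seq (\<lambda>n. 1 / p_c c n)"
    by (intro exI[of _ \<delta>]) (auto simp: dist_real_def)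
qed

end
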